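(* Let $\mathcal{X}\subseteq\mathcal{B}(0,R)$ be compact convex, $\mathcal{Z}$ a set and $f:\mathcal{X}\times\mathcal{Z}\to\mathbb{R}$ with $f(\cdot,z)\in\mathcal{F}^0_{\mathcal{X}}(L)$ for all $z$. Let $\pi$ be any permutation of $[n]$, $K\ge1$, $T=nK$, and let $(\eta_t)_{t\in[T]}$ be a non-increasing sequence of positive step sizes. Fixed-permutation SGD $\mathcal{A}_{\sf PerSGD}$ on $S=(z_1,\dots,z_n)$: start from a fixed initial point $x^0_{n+1}\in\mathcal{X}$; for $k=1,\dots,K$ set $x^k_1=x^{k-1}_{n+1}$ and for $t=1,\dots,n$ set $x^k_{t+1}=\mathsf{Proj}_{\mathcal{X}}(x^k_t-\eta_{(k-1)n+t}\nabla f(x^k_t,z_{\pi(t)}))$, and let $\bar\eta_k=\sum_{t=1}^n\eta_{(k-1)n+t}$; output $\bar x^K=\frac{1}{\sum_{k\in[K]}\bar\eta_k}\sum_{k\in[K]}\bar\eta_k x^k_1$. Then, with the same $\pi$ and initial point used for both datasets, $$\sup_{S\simeq S'}\|\mathcal{A}_{\sf PerSGD}(S)-\mathcal{A}_{\sf PerSGD}(S')\|\le\min\Big\{2R,\;2L\Big(\sqrt{\sum_{t=1}^{T-1}\eta_t^2}+\frac2n\sum_{t=1}^{T-1}\eta_t\Big)\Big\}.$$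
   Context: $\|\cdot\|$ is the Euclidean norm, $\mathcal{B}(0,R)$ the Euclidean ball of radius $R$, $\mathsf{Proj}_{\mathcal{X}}$ the Euclidean projection. $\mathcal{F}^0_{\mathcal{X}}(L)$ is the class of convex $L$-Lipschitz functions on $\mathcal{X}$ (Lipschitz on an open set containing $\mathcal{X}$, so subgradients have norm at most $L$). $\nabla f(x,z)$ is a fixed arbitrary selection of a subgradient of $f(\cdot,z)$ at $x$. Datasets $S,S'\in\mathcal{Z}^n$ are neighboring, $S\simeq S'$, if they differ in at most one entry. *)

theory Defs
  imports "HOL-Analysis.Analysis"
begin

definition proj_set :: "'a::euclidean_space set \<Rightarrow> 'a \<Rightarrow> 'a" where
  "proj_set X y = closest_point X y"

text \<open>Global step j+1 corresponds to epoch k = j div n + 1 and inner step t = j mod n + 1,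
  with step size index (k-1)n + t = j+1. Hence x^k_t = persgd_seq ... ((k-1)*n + t - 1);
  in particular x^k_1 = persgd_seq ... ((k-1)*n).\<close>
primrec persgd_seq ::
  "'a::euclidean_space set \<Rightarrow> ('a \<Rightarrow> 'z \<Rightarrow> 'a) \<Rightarrow> (nat \<Rightarrow> real) \<Rightarrow> nat \<Rightarrow> (nat \<Rightarrow> nat)
    \<Rightarrow> (nat \<Rightarrow> 'z) \<Rightarrow> 'a \<Rightarrow> nat \<Rightarrow> 'a" where
  "persgd_seq X g \<eta> n \<pi> S x0 0 = x0"
| "persgd_seq X g \<eta> n \<pi> S x0 (Suc j) =
     (let x = persgd_seq X g \<eta> n \<pi> S x0 j
      in proj_set X (x - \<eta> (Suc j) *\<^sub>R g x (S (\<pi> (j mod n + 1)))))"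

definition epoch_step :: "(nat \<Rightarrow> real) \<Rightarrow> nat \<Rightarrow> nat \<Rightarrow> real" where
  "epoch_step \<eta> n k = (\<Sum>t=1..n. \<eta> ((k - 1) * n + t))"

definition persgd ::
  "'a::euclidean_space set \<Rightarrow> ('a \<Rightarrow> 'z \<Rightarrow> 'a) \<Rightarrow> (nat \<Rightarrow> real) \<Rightarrow> nat \<Rightarrow> nat \<Rightarrow> (nat \<Rightarrow> nat)
    \<Rightarrow> 'a \<Rightarrow> (nat \<Rightarrow> 'z) \<Rightarrow> 'a" where
  "persgd X g \<eta> n K \<pi> x0 S =
     (1 / (\<Sum>k=1..K. epoch_step \<eta> n k)) *\<^sub>R
       (\<Sum>k=1..K. epoch_step \<eta> n k *\<^sub>R persgd_seq X g \<eta> n \<pi> S x0 ((k - 1) * n))"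

definition neighboring :: "nat \<Rightarrow> (nat \<Rightarrow> 'z) \<Rightarrow> (nat \<Rightarrow> 'z) \<Rightarrow> bool" where
  "neighboring n S S' \<longleftrightarrow> card {i \<in> {1..n}. S i \<noteq> S' i} \<le> 1"

end

theory Submission
  imports Defs
begin

(* Run both datasets with the same permutation and compare the iterates x_j and y_j.
   Projection is nonexpansive and subgradients of convex functions are monotone, so a step
   that uses a sample common to both datasets increases |x - y|^2 by at most (2 L eta)^2,
   whereas a step that uses the single differing sample increases |x - y| by at most 2 L eta.
   The differing sample is used once per epoch.  Its first use happens while x = y, so it
   also fits the quadratic pattern; each later use is paid for by the n step sizes of the
   preceding epoch, which by monotonicity all dominate the current one.  Hence
   |x_j - y_j| <= 2 L (sqrt (sum eta^2) + (1/n) sum eta), and the output, a weighted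
   average of iterates, inherits this bound as well as the diameter bound 2 R.
   Convexity and the Lipschitz property of f enter only through the subgradient
   inequality and the bound on g. *)

lemma mixed_recurrence_bound:
  fixes d A B :: "nat \<Rightarrow> real"
  assumes "d 0 \<le> sqrt (A 0) + B 0" and "\<And>j. 0 \<le> d j" and "0 \<le> A 0" and "0 \<le> B 0"
    and A_mono: "\<And>j. j < N \<Longrightarrow> A j \<le> A (Suc j)"
    and B_mono: "\<And>j. j < N \<Longrightarrow> B j \<le> B (Suc j)"
    and step: "\<And>j. j < N \<Longrightarrow>
      (d (Suc j))\<^sup>2 \<le> (d j)\<^sup>2 + (A (Suc j) - A j) \<or> d (Suc j) \<le> d j + (B (Suc j) - B j)"
  shows "j \<le> N \<Longrightarrow> d j \<le> sqrt (A j) + B j"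
proof (induction j)
  case 0
  show ?case using assms(1) .
next
  case (Suc j)
  then have IH: "d j \<le> sqrt (A j) + B j" and jN: "j < N" by auto
  have "0 \<le> A j \<and> 0 \<le> B j" if "j \<le> N" for j
    using that
  proof (induction j)
    case (Suc j)
    then show ?case using A_mono[of j] B_mono[of j] by simp
  qed (use assms(3,4) in simp)
  then have A0: "0 \<le> A j" and B0: "0 \<le> B j" using jN by auto
  have sqrt_mono: "sqrt (A j) \<le> sqrt (A (Suc j))" using A_mono[OF jN] by simp
  from step[OF jN] show ?case
  proof
    assume sq: "(d (Suc j))\<^sup>2 \<le> (d j)\<^sup>2 + (A (Suc j) - A j)"
    have "(d j)\<^sup>2 \<le> (sqrt (A j) + B j)\<^sup>2"
      using IH assms(2) by (intro power_mono) auto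
    then have "(d (Suc j))\<^sup>2 \<le> A (Suc j) + 2 * sqrt (A j) * B j + (B j)\<^sup>2"
      using sq A0 by (simp add: power2_sum)
    also have "\<dots> \<le> A (Suc j) + 2 * sqrt (A (Suc j)) * B (Suc j) + (B (Suc j))\<^sup>2"
    proof -
      have "sqrt (A j) * B j \<le> sqrt (A (Suc j)) * B (Suc j)"
        using sqrt_mono B_mono[OF jN] A0 B0 by (simp add: mult_mono)
      moreover have "(B j)\<^sup>2 \<le> (B (Suc j))\<^sup>2"
        using B_mono[OF jN] B0 by (simp add: power_mono)
      ultimately show ?thesis by linarith
    qed
    also have "\<dots> = (sqrt (A (Suc j)) + B (Suc j))\<^sup>2"
      using A0 A_mono[OF jN] by (simp add: power2_sum)
    finally show ?thesis
      by (rule power2_le_imp_le) (use A0 A_mono[OF jN] B0 B_mono[OF jN] in auto)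
  next
    assume "d (Suc j) \<le> d j + (B (Suc j) - B j)"
    then show ?thesis using IH sqrt_mono by linarith
  qed
qed

(* The largest t <= j with t = q + 1 (mod n), or 0 if there is none: for the iterates
   of persgd_seq, the index of the iterate produced by the latest step that used the sample
   at position q + 1 of the permutation. *)
definition last_hit :: "nat \<Rightarrow> nat \<Rightarrow> nat \<Rightarrow> nat" where
  "last_hit n q j = (if j \<le> q then 0 else j - (j - Suc q) mod n)"

lemma last_hit_le: "last_hit n q j \<le> j"
  by (simp add: last_hit_def)

lemma last_hit_Suc_other:
  assumes "q < n" "j mod n \<noteq> q"
  shows "last_hit n q (Suc j) = last_hit n q j"
proof (cases "j \<le> q")
  case True
  then have "j mod n = j" using assms(1) by simp
  then have "Suc j \<le> q" using True assms(2) by linarith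
  then show ?thesis by (simp add: last_hit_def)
next
  case False
  have "(j - q) mod n \<noteq> 0"
    using assms False by (metis mod_eq_0_iff_dvd mod_nat_eqI nle_le)
  then have "(Suc j - Suc q) mod n = Suc ((j - Suc q) mod n)"
    using False by (metis Suc_diff_Suc diff_Suc_Suc linorder_not_le mod_Suc)
  then show ?thesis using False by (simp add: last_hit_def)
qed

lemma last_hit_Suc_hit:
  assumes "q < j" "j mod n = q"
  shows "last_hit n q (Suc j) = Suc j" "last_hit n q j + n = Suc j"
proof -
  have "n \<noteq> 0" using assms by (cases "n = 0") auto
  have hit: "(j - q) mod n = 0" using assms by (auto simp: mod_eq_0_iff_dvd)
  have "n \<le> j - q"
  proof (rule ccontr)
    assume "\<not> n \<le> j - q"
    then have "(j - q) mod n = j - q" by simp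
    then show False using hit assms(1) by simp
  qed
  moreover have "(j - Suc q) mod n = n - 1"
    using hit by (metis Suc_diff_Suc Zero_not_Suc assms(1) diff_Suc_1 mod_Suc)
  ultimately show "last_hit n q (Suc j) = Suc j" "last_hit n q j + n = Suc j"
    using assms(1) hit \<open>n \<noteq> 0\<close> by (simp_all add: last_hit_def)
qed

lemma last_hit_mono:
  assumes "q < n"
  shows "last_hit n q j \<le> last_hit n q (Suc j)"
proof (cases "j mod n = q")
  case False
  then show ?thesis using last_hit_Suc_other[OF assms] by simp
next
  case True
  then have "q \<le> j" using mod_less_eq_dividend[of j n] by simp
  then consider "q < j" | "j = q" by linarith
  then show ?thesis
  proof cases
    case 1
    then show ?thesis using last_hit_Suc_hit[OF _ True] last_hit_le by (metis le_SucI)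
  next
    case 2
    then show ?thesis by (simp add: last_hit_def)
  qed
qed

lemma proj_set_in: "closed X \<Longrightarrow> X \<noteq> {} \<Longrightarrow> proj_set X y \<in> X"
  unfolding proj_set_def by (rule closest_point_in_set)

lemma proj_set_dist_le:
  "convex X \<Longrightarrow> closed X \<Longrightarrow> X \<noteq> {} \<Longrightarrow> norm (proj_set X u - proj_set X v) \<le> norm (u - v)"
  using closest_point_lipschitz unfolding proj_set_def dist_norm by blast

lemma proj_grad_step_dist_le:
  fixes u v gu gv :: "'a::euclidean_space"
  assumes "convex X" "closed X" "X \<noteq> {}" "norm gu \<le> L" "norm gv \<le> L" "0 \<le> e"
  shows "norm (proj_set X (u - e *\<^sub>R gu) - proj_set X (v - e *\<^sub>R gv)) \<le> norm (u - v) + 2 * L * e"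
proof -
  have "norm (proj_set X (u - e *\<^sub>R gu) - proj_set X (v - e *\<^sub>R gv))
      \<le> norm ((u - v) - e *\<^sub>R (gu - gv))"
    using proj_set_dist_le[OF assms(1-3), of "u - e *\<^sub>R gu" "v - e *\<^sub>R gv"]
    by (simp add: algebra_simps)
  also have "\<dots> \<le> norm (u - v) + e * norm (gu - gv)"
    using norm_triangle_ineq4[of "u - v" "e *\<^sub>R (gu - gv)"] assms(6) by simp
  also have "e * norm (gu - gv) \<le> e * (2 * L)"
    using assms norm_triangle_ineq4[of gu gv] by (intro mult_left_mono) auto
  finally show ?thesis by (simp add: algebra_simps)
qed

lemma proj_grad_step_dist_sq_le:
  fixes u v gu gv :: "'a::euclidean_space"
  assumes "convex X" "closed X" "X \<noteq> {}" "norm gu \<le> L" "norm gv \<le> L" "0 \<le> e"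
    and monotone: "0 \<le> (gu - gv) \<bullet> (u - v)"
  shows "(norm (proj_set X (u - e *\<^sub>R gu) - proj_set X (v - e *\<^sub>R gv)))\<^sup>2
    \<le> (norm (u - v))\<^sup>2 + (2 * L * e)\<^sup>2"
proof -
  have "norm (proj_set X (u - e *\<^sub>R gu) - proj_set X (v - e *\<^sub>R gv))
      \<le> norm ((u - v) - e *\<^sub>R (gu - gv))"
    using proj_set_dist_le[OF assms(1-3), of "u - e *\<^sub>R gu" "v - e *\<^sub>R gv"]
    by (simp add: algebra_simps)
  then have "(norm (proj_set X (u - e *\<^sub>R gu) - proj_set X (v - e *\<^sub>R gv)))\<^sup>2
      \<le> (norm ((u - v) - e *\<^sub>R (gu - gv)))\<^sup>2"
    by (intro power_mono) auto
  also have "\<dots> = (norm (u - v))\<^sup>2 - 2 * e * ((gu - gv) \<bullet> (u - v)) + e\<^sup>2 * (norm (gu - gv))\<^sup>2"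
    unfolding power2_norm_eq_inner
    by (simp add: inner_diff_left inner_diff_right inner_commute algebra_simps power2_eq_square)
  also have "\<dots> \<le> (norm (u - v))\<^sup>2 + e\<^sup>2 * (2 * L)\<^sup>2"
  proof -
    have "norm (gu - gv) \<le> 2 * L" using assms norm_triangle_ineq4[of gu gv] by auto
    then have "e\<^sup>2 * (norm (gu - gv))\<^sup>2 \<le> e\<^sup>2 * (2 * L)\<^sup>2"
      by (intro mult_left_mono power_mono) auto
    moreover have "0 \<le> 2 * e * ((gu - gv) \<bullet> (u - v))" using monotone assms(6) by simp
    ultimately show ?thesis by linarith
  qed
  finally show ?thesis by (simp add: power_mult_distrib algebra_simps)
qed

lemma subgradient_inner_monotone:
  fixes x y gx gy :: "'a::real_inner"
  assumes "f x + gx \<bullet> (y - x) \<le> f y" and "f y + gy \<bullet> (x - y) \<le> f x"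
  shows "0 \<le> (gx - gy) \<bullet> (x - y)"
proof -
  have "(gx - gy) \<bullet> (x - y) = - (gx \<bullet> (y - x)) - gy \<bullet> (x - y)"
    by (simp add: inner_diff_left inner_diff_right algebra_simps)
  then show ?thesis using assms by linarith
qed

lemma neighboring_obtain_index:
  assumes "neighboring n S S'" and "1 \<le> n"
  obtains i where "i \<in> {1..n}" "\<And>k. k \<in> {1..n} \<Longrightarrow> k \<noteq> i \<Longrightarrow> S k = S' k"
proof -
  let ?D = "{i \<in> {1..n}. S i \<noteq> S' i}"
  have "card ?D \<le> 1" using assms(1) unfolding neighboring_def .
  then have single: "\<forall>a\<in>?D. \<forall>b\<in>?D. a = b" by (simp add: card_le_Suc0_iff_eq)
  show ?thesis
  proof (cases "?D = {}")
    case True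
    show ?thesis
    proof (rule that[of 1])
      show "1 \<in> {1..n}" using assms(2) by simp
      show "S k = S' k" if "k \<in> {1..n}" for k
        using True that by blast
    qed
  next
    case False
    then obtain i where i: "i \<in> ?D" by blast
    show ?thesis
    proof (rule that[of i])
      show "i \<in> {1..n}" using i by simp
      show "S k = S' k" if "k \<in> {1..n}" "k \<noteq> i" for k
      proof (rule ccontr)
        assume "S k \<noteq> S' k"
        then have "k \<in> ?D" using that(1) by simp
        then show False using single[rule_format, OF _ i] that(2) by simp
      qed
    qed
  qed
qed

lemma neighboring_permuted_obtain_position:
  assumes "neighboring n S S'" and "1 \<le> n" and perm: "\<pi> permutes {1..n}"
  obtains q where "q < n" "\<And>j. j mod n \<noteq> q \<Longrightarrow> S (\<pi> (j mod n + 1)) = S' (\<pi> (j mod n + 1))"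
proof -
  obtain i where i: "i \<in> {1..n}" and agree: "\<And>k. k \<in> {1..n} \<Longrightarrow> k \<noteq> i \<Longrightarrow> S k = S' k"
    using neighboring_obtain_index[OF assms(1,2)] by blast
  have inv_i: "inv \<pi> i \<in> {1..n}" "\<pi> (inv \<pi> i) = i"
    using i permutes_in_image[OF permutes_inv[OF perm]] permutes_inverses(1)[OF perm] by auto
  show ?thesis
  proof (rule that[of "inv \<pi> i - 1"])
    show "inv \<pi> i - 1 < n" using inv_i by auto
    fix j assume "j mod n \<noteq> inv \<pi> i - 1"
    then have "j mod n + 1 \<noteq> inv \<pi> i" using inv_i(1) by linarith
    then have "\<pi> (j mod n + 1) \<noteq> i" using permutes_inverses(2)[OF perm] by metis
    moreover have "\<pi> (j mod n + 1) \<in> {1..n}"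
      using assms(2) permutes_in_image[OF perm] by (simp add: Suc_le_eq)
    ultimately show "S (\<pi> (j mod n + 1)) = S' (\<pi> (j mod n + 1))" using agree by blast
  qed
qed

lemma persgd_seq_Suc':
  "persgd_seq X g \<eta> n \<pi> S x0 (Suc j) = proj_set X (persgd_seq X g \<eta> n \<pi> S x0 j
     - \<eta> (Suc j) *\<^sub>R g (persgd_seq X g \<eta> n \<pi> S x0 j) (S (\<pi> (j mod n + 1))))"
  by (simp add: Let_def)

lemma persgd_seq_in:
  "closed X \<Longrightarrow> x0 \<in> X \<Longrightarrow> persgd_seq X g \<eta> n \<pi> S x0 j \<in> X"
  by (cases j) (auto simp: Let_def intro!: proj_set_in)

lemma persgd_seq_eq_before_difference:
  assumes "\<And>i. i < j \<Longrightarrow> S (\<pi> (i mod n + 1)) = S' (\<pi> (i mod n + 1))"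
  shows "persgd_seq X g \<eta> n \<pi> S x0 j = persgd_seq X g \<eta> n \<pi> S' x0 j"
  using assms by (induction j) (simp_all add: persgd_seq_Suc')

lemma persgd_seq_Suc_dist_le:
  fixes X :: "'a::euclidean_space set"
  assumes "convex X" "closed X" "x0 \<in> X" and g_bound: "\<And>x z. x \<in> X \<Longrightarrow> norm (g x z) \<le> L"
    and "0 \<le> \<eta> (Suc i)"
  shows "norm (persgd_seq X g \<eta> n \<pi> S x0 (Suc i) - persgd_seq X g \<eta> n \<pi> S' x0 (Suc i))
    \<le> norm (persgd_seq X g \<eta> n \<pi> S x0 i - persgd_seq X g \<eta> n \<pi> S' x0 i) + 2 * L * \<eta> (Suc i)"
proof -
  have "X \<noteq> {}" "persgd_seq X g \<eta> n \<pi> S x0 i \<in> X" "persgd_seq X g \<eta> n \<pi> S' x0 i \<in> X"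
    using assms(2,3) by (auto intro: persgd_seq_in)
  then show ?thesis
    unfolding persgd_seq_Suc' using assms(1,2,5) by (intro proj_grad_step_dist_le g_bound)
qed

lemma persgd_seq_Suc_dist_sq_le:
  fixes X :: "'a::euclidean_space set"
  assumes "convex X" "closed X" "x0 \<in> X" and g_bound: "\<And>x z. x \<in> X \<Longrightarrow> norm (g x z) \<le> L"
    and subgrad: "\<And>x z y. x \<in> X \<Longrightarrow> y \<in> X \<Longrightarrow> f y z \<ge> f x z + g x z \<bullet> (y - x)"
    and "0 \<le> \<eta> (Suc i)" and same_sample: "S (\<pi> (i mod n + 1)) = S' (\<pi> (i mod n + 1))"
  shows "(norm (persgd_seq X g \<eta> n \<pi> S x0 (Suc i) - persgd_seq X g \<eta> n \<pi> S' x0 (Suc i)))\<^sup>2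
    \<le> (norm (persgd_seq X g \<eta> n \<pi> S x0 i - persgd_seq X g \<eta> n \<pi> S' x0 i))\<^sup>2
      + (2 * L * \<eta> (Suc i))\<^sup>2"
proof -
  let ?x = "persgd_seq X g \<eta> n \<pi> S x0 i" and ?y = "persgd_seq X g \<eta> n \<pi> S' x0 i"
    and ?z = "S (\<pi> (i mod n + 1))"
  have in_X: "?x \<in> X" "?y \<in> X" and "X \<noteq> {}"
    using assms(2,3) by (auto intro: persgd_seq_in)
  have "0 \<le> (g ?x ?z - g ?y ?z) \<bullet> (?x - ?y)"
    using subgradient_inner_monotone[of "\<lambda>x. f x ?z"] subgrad[OF in_X] subgrad[OF in_X(2,1)]
    by blast
  then show ?thesis
    unfolding persgd_seq_Suc' same_sample[symmetric]
    using assms(1,2,6) \<open>X \<noteq> {}\<close> in_X by (intro proj_grad_step_dist_sq_le g_bound)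
qed

lemma persgd_seq_dist_le:
  fixes X :: "'a::euclidean_space set" and f :: "'a \<Rightarrow> 'z \<Rightarrow> real"
  assumes "convex X" "closed X" "x0 \<in> X"
    and g_bound: "\<And>x z. x \<in> X \<Longrightarrow> norm (g x z) \<le> L"
    and subgrad: "\<And>x z y. x \<in> X \<Longrightarrow> y \<in> X \<Longrightarrow> f y z \<ge> f x z + g x z \<bullet> (y - x)"
    and "1 \<le> n" "\<pi> permutes {1..n}" "neighboring n S S'"
    and \<eta>_nonneg: "\<And>t. t \<in> {1..N} \<Longrightarrow> 0 \<le> \<eta> t"
    and \<eta>_antimono: "\<And>s t. s \<in> {1..N} \<Longrightarrow> t \<in> {1..N} \<Longrightarrow> s \<le> t \<Longrightarrow> \<eta> t \<le> \<eta> s"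
    and "j \<le> N"
  shows "norm (persgd_seq X g \<eta> n \<pi> S x0 j - persgd_seq X g \<eta> n \<pi> S' x0 j)
    \<le> 2 * L * sqrt (\<Sum>t=1..N. (\<eta> t)\<^sup>2) + 2 * L / n * (\<Sum>t=1..N. \<eta> t)"
proof -
  obtain q where "q < n"
    and same_sample: "\<And>i. i mod n \<noteq> q \<Longrightarrow> S (\<pi> (i mod n + 1)) = S' (\<pi> (i mod n + 1))"
    using neighboring_permuted_obtain_position[OF assms(8,6,7)] by blast
  have "0 \<le> L" using g_bound[OF assms(3)] by (meson norm_ge_zero order_trans)
  define d where "d i = norm (persgd_seq X g \<eta> n \<pi> S x0 i - persgd_seq X g \<eta> n \<pi> S' x0 i)" for i
  define A where "A i = (2 * L)\<^sup>2 * (\<Sum>t=1..i. (\<eta> t)\<^sup>2)" for i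
  define B where "B i = 2 * L / n * (\<Sum>t=1..last_hit n q i. \<eta> t)" for i
  have dist_step: "d (Suc i) \<le> d i + 2 * L * \<eta> (Suc i)" if "i < N" for i
    unfolding d_def using that assms(1-3) g_bound \<eta>_nonneg by (intro persgd_seq_Suc_dist_le) auto
  have A_step: "A (Suc i) - A i = (2 * L * \<eta> (Suc i))\<^sup>2" for i
    by (simp add: A_def power_mult_distrib algebra_simps)
  have dist_sq_step: "(d (Suc i))\<^sup>2 \<le> (d i)\<^sup>2 + (A (Suc i) - A i)"
    if "i < N" "S (\<pi> (i mod n + 1)) = S' (\<pi> (i mod n + 1))" for i
  proof -
    have "(d (Suc i))\<^sup>2 \<le> (d i)\<^sup>2 + (2 * L * \<eta> (Suc i))\<^sup>2"
      unfolding d_def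
      by (rule persgd_seq_Suc_dist_sq_le[OF assms(1-3) g_bound subgrad]) (use \<eta>_nonneg that in auto)
    then show ?thesis by (simp only: A_step)
  qed
  have "S (\<pi> (i mod n + 1)) = S' (\<pi> (i mod n + 1))" if "i < q" for i
    using same_sample[of i] that \<open>q < n\<close> by simp
  then have "persgd_seq X g \<eta> n \<pi> S x0 q = persgd_seq X g \<eta> n \<pi> S' x0 q"
    by (rule persgd_seq_eq_before_difference)
  then have "d q = 0" by (simp add: d_def)
  have "d j \<le> sqrt (A j) + B j"
  proof (rule mixed_recurrence_bound[where N = N])
    show "d 0 \<le> sqrt (A 0) + B 0" "0 \<le> A 0" "0 \<le> B 0" "0 \<le> d i" for i
      by (simp_all add: d_def A_def B_def last_hit_def)
    show "A i \<le> A (Suc i)" for i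
      using A_step[of i] zero_le_power2[of "2 * L * \<eta> (Suc i)"] by linarith
    show "B i \<le> B (Suc i)" if "i < N" for i
      unfolding B_def using \<open>0 \<le> L\<close> last_hit_mono[OF \<open>q < n\<close>, of i] last_hit_le[of n q "Suc i"] that
      by (intro mult_left_mono sum_mono2 \<eta>_nonneg) auto
    fix i assume "i < N"
    consider "i mod n \<noteq> q" | "i = q" | "q < i" "i mod n = q"
      using mod_less_eq_dividend[of i n] by linarith
    then show "(d (Suc i))\<^sup>2 \<le> (d i)\<^sup>2 + (A (Suc i) - A i) \<or> d (Suc i) \<le> d i + (B (Suc i) - B i)"
    proof cases
      case 1
      then show ?thesis using dist_sq_step \<open>i < N\<close> same_sample by blast
    next
      case 2
      then have "d (Suc i) \<le> 2 * L * \<eta> (Suc i)"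
        using dist_step[OF \<open>i < N\<close>] \<open>d q = 0\<close> by simp
      moreover have "0 \<le> d (Suc i)" by (simp add: d_def)
      ultimately have "(d (Suc i))\<^sup>2 \<le> (2 * L * \<eta> (Suc i))\<^sup>2" by (rule power_mono)
      then show ?thesis using 2 \<open>d q = 0\<close> by (simp add: A_step)
    next
      case 3
      define m where "m = last_hit n q i"
      have hit: "last_hit n q (Suc i) = m + n" "Suc i = m + n"
        using last_hit_Suc_hit[OF 3] unfolding m_def by simp_all
      \<comment> \<open>The differing sample was last used one epoch earlier, producing iterate \<open>m\<close>;
        each of the \<open>n\<close> step sizes since then dominates \<open>\<eta> (Suc i)\<close>.\<close>
      have "(\<Sum>t = Suc m..m + n. \<eta> (m + n)) \<le> (\<Sum>t = Suc m..m + n. \<eta> t)"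
        by (rule sum_mono) (use \<eta>_antimono \<open>i < N\<close> hit(2) in auto)
      then have "real n * \<eta> (Suc i) \<le> (\<Sum>t = Suc m..m + n. \<eta> t)"
        using hit(2) by simp
      also have "\<dots> = (\<Sum>t=1..m + n. \<eta> t) - (\<Sum>t=1..m. \<eta> t)"
        using sum.ub_add_nat[where m = 1 and n = m and p = n and g = \<eta>] by simp
      finally have "2 * L / n * (real n * \<eta> (Suc i))
          \<le> 2 * L / n * ((\<Sum>t=1..m + n. \<eta> t) - (\<Sum>t=1..m. \<eta> t))"
        using \<open>0 \<le> L\<close> by (intro mult_left_mono) auto
      then have "2 * L * \<eta> (Suc i) \<le> B (Suc i) - B i"
        using \<open>1 \<le> n\<close> unfolding B_def hit(1) m_def[symmetric] by (simp add: right_diff_distrib)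
      then show ?thesis using dist_step \<open>i < N\<close> by force
    qed
  qed (rule \<open>j \<le> N\<close>)
  moreover have "sqrt (A j) \<le> 2 * L * sqrt (\<Sum>t=1..N. (\<eta> t)\<^sup>2)"
  proof -
    have "A j \<le> A N"
      unfolding A_def using \<open>j \<le> N\<close> by (intro mult_left_mono sum_mono2) auto
    then have "sqrt (A j) \<le> sqrt (A N)" by simp
    also have "\<dots> = 2 * L * sqrt (\<Sum>t=1..N. (\<eta> t)\<^sup>2)"
      using \<open>0 \<le> L\<close> by (simp add: A_def real_sqrt_mult)
    finally show ?thesis .
  qed
  moreover have "B j \<le> 2 * L / n * (\<Sum>t=1..N. \<eta> t)"
    unfolding B_def using \<open>0 \<le> L\<close> \<open>j \<le> N\<close> last_hit_le[of n q j]
    by (intro mult_left_mono sum_mono2 \<eta>_nonneg) auto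
  ultimately show ?thesis by (simp add: d_def)
qed

lemma weighted_average_dist_le:
  fixes u v :: "nat \<Rightarrow> 'a::real_normed_vector" and w :: "nat \<Rightarrow> real"
  assumes "finite I" "I \<noteq> {}" and w_pos: "\<And>k. k \<in> I \<Longrightarrow> 0 < w k"
    and dist: "\<And>k. k \<in> I \<Longrightarrow> norm (u k - v k) \<le> M"
  shows "norm ((1 / sum w I) *\<^sub>R (\<Sum>k\<in>I. w k *\<^sub>R u k) - (1 / sum w I) *\<^sub>R (\<Sum>k\<in>I. w k *\<^sub>R v k)) \<le> M"
proof -
  have W: "0 < sum w I" using assms by (intro sum_pos) auto
  have "(1 / sum w I) *\<^sub>R (\<Sum>k\<in>I. w k *\<^sub>R u k) - (1 / sum w I) *\<^sub>R (\<Sum>k\<in>I. w k *\<^sub>R v k)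
      = (1 / sum w I) *\<^sub>R (\<Sum>k\<in>I. w k *\<^sub>R (u k - v k))"
    by (simp add: scaleR_diff_right sum_subtractf)
  then have "norm ((1 / sum w I) *\<^sub>R (\<Sum>k\<in>I. w k *\<^sub>R u k) - (1 / sum w I) *\<^sub>R (\<Sum>k\<in>I. w k *\<^sub>R v k))
      = norm (\<Sum>k\<in>I. w k *\<^sub>R (u k - v k)) / sum w I"
    using W by simp
  also have "\<dots> \<le> (\<Sum>k\<in>I. w k * M) / sum w I"
  proof (rule divide_right_mono)
    have "norm (\<Sum>k\<in>I. w k *\<^sub>R (u k - v k)) \<le> (\<Sum>k\<in>I. w k * norm (u k - v k))"
      using norm_sum[of "\<lambda>k. w k *\<^sub>R (u k - v k)" I] w_pos by (simp add: less_imp_le)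
    also have "\<dots> \<le> (\<Sum>k\<in>I. w k * M)"
      using w_pos dist by (intro sum_mono mult_left_mono) (auto simp: less_imp_le)
    finally show "norm (\<Sum>k\<in>I. w k *\<^sub>R (u k - v k)) \<le> (\<Sum>k\<in>I. w k * M)" .
  qed (use W in simp)
  also have "\<dots> = M" using W by (simp add: sum_distrib_right[symmetric])
  finally show ?thesis .
qed

lemma epoch_start_add_le:
  fixes k K n :: nat
  assumes "k \<in> {1..K}"
  shows "(k - 1) * n + n \<le> n * K"
proof -
  have "(k - 1) * n + n = k * n" using assms by (cases k) auto
  moreover have "k * n \<le> K * n" using assms by (intro mult_le_mono1) simp
  ultimately show ?thesis using mult.commute[of n K] by linarith
qed

lemma epoch_step_pos:
  assumes "1 \<le> n" "k \<in> {1..K}" "\<And>t. t \<in> {1..n * K} \<Longrightarrow> 0 < \<eta> t"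
  shows "0 < epoch_step \<eta> n k"
  unfolding epoch_step_def
proof (rule sum_pos)
  fix t assume "t \<in> {1..n}"
  then have "(k - 1) * n + t \<in> {1..n * K}" using epoch_start_add_le[OF assms(2), of n] by simp
  then show "0 < \<eta> ((k - 1) * n + t)" by (rule assms(3))
qed (use assms(1) in auto)

lemma persgd_dist_le:
  assumes "1 \<le> n" "1 \<le> K" "\<And>t. t \<in> {1..n * K} \<Longrightarrow> 0 < \<eta> t"
    and "\<And>k. k \<in> {1..K} \<Longrightarrow>
      norm (persgd_seq X g \<eta> n \<pi> S x0 ((k - 1) * n) - persgd_seq X g \<eta> n \<pi> S' x0 ((k - 1) * n)) \<le> M"
  shows "norm (persgd X g \<eta> n K \<pi> x0 S - persgd X g \<eta> n K \<pi> x0 S') \<le> M"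
  unfolding persgd_def
  using assms by (intro weighted_average_dist_le epoch_step_pos) auto

theorem theorem3p4:
  fixes X :: "'a::euclidean_space set"
    and f :: "'a \<Rightarrow> 'z \<Rightarrow> real"
    and g :: "'a \<Rightarrow> 'z \<Rightarrow> 'a"
    and R L :: real and n K T :: nat
    and \<pi> :: "nat \<Rightarrow> nat" and \<eta> :: "nat \<Rightarrow> real" and x0 :: 'a
  assumes X_compact: "compact X" and X_convex: "convex X"
    and X_ball: "X \<subseteq> cball 0 R"
    and f_convex: "\<And>z. convex_on X (\<lambda>x. f x z)"
    and f_lip: "\<And>z. \<exists>U. open U \<and> X \<subseteq> U \<and> L-lipschitz_on U (\<lambda>x. f x z)"
    and g_subgrad: "\<And>x z y. x \<in> X \<Longrightarrow> y \<in> X \<Longrightarrow> f y z \<ge> f x z + g x z \<bullet> (y - x)"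
    and g_bound: "\<And>x z. x \<in> X \<Longrightarrow> norm (g x z) \<le> L"
    and n_pos: "n \<ge> 1"
    and perm: "\<pi> permutes {1..n}"
    and K_pos: "K \<ge> 1" and T_def: "T = n * K"
    and eta_pos: "\<And>t. t \<in> {1..T} \<Longrightarrow> \<eta> t > 0"
    and eta_mono: "\<And>s t. s \<in> {1..T} \<Longrightarrow> t \<in> {1..T} \<Longrightarrow> s \<le> t \<Longrightarrow> \<eta> t \<le> \<eta> s"
    and x0_in: "x0 \<in> X"
  shows "\<forall>S S'. neighboring n S S' \<longrightarrow>
           norm (persgd X g \<eta> n K \<pi> x0 S - persgd X g \<eta> n K \<pi> x0 S')
             \<le> min (2 * R)
                 (2 * L * (sqrt (\<Sum>t=1..T-1. (\<eta> t)\<^sup>2) + 2 / real n * (\<Sum>t=1..T-1. \<eta> t)))"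
proof (intro allI impI)
  fix S S' :: "nat \<Rightarrow> 'z"
  assume neighbors: "neighboring n S S'"
  let ?x = "persgd_seq X g \<eta> n \<pi> S x0" and ?y = "persgd_seq X g \<eta> n \<pi> S' x0"
    and ?bound = "2 * L * (sqrt (\<Sum>t=1..T-1. (\<eta> t)\<^sup>2) + 2 / real n * (\<Sum>t=1..T-1. \<eta> t))"
  have "closed X" using X_compact by (rule compact_imp_closed)
  have "0 \<le> L" using g_bound[OF x0_in] by (meson norm_ge_zero order_trans)
  have \<eta>_nonneg: "0 \<le> \<eta> t" if "t \<in> {1..T-1}" for t
    using eta_pos[of t] that by fastforce
  have \<eta>_antimono: "\<eta> t \<le> \<eta> s" if "s \<in> {1..T-1}" "t \<in> {1..T-1}" "s \<le> t" for s t
    using eta_mono[of s t] that by fastforce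
  \<comment> \<open>The argument yields the constant \<open>1 / n\<close>; the stated \<open>2 / n\<close> is weaker.\<close>
  have slack: "2 * L * sqrt (\<Sum>t=1..T-1. (\<eta> t)\<^sup>2) + 2 * L / n * (\<Sum>t=1..T-1. \<eta> t) \<le> ?bound"
  proof -
    have "0 \<le> 2 * L / n * (\<Sum>t=1..T-1. \<eta> t)"
      using \<open>0 \<le> L\<close> sum_nonneg[of "{1..T-1}" \<eta>] \<eta>_nonneg by simp
    moreover have "?bound = 2 * L * sqrt (\<Sum>t=1..T-1. (\<eta> t)\<^sup>2) + 2 * (2 * L / n * (\<Sum>t=1..T-1. \<eta> t))"
      by (simp add: algebra_simps)
    ultimately show ?thesis by linarith
  qed
  have "norm (?x j - ?y j) \<le> 2 * R" for j
    using persgd_seq_in[OF \<open>closed X\<close> x0_in] X_ball norm_triangle_ineq4[of "?x j" "?y j"]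
    by (smt (verit, best) mem_cball_0 subsetD)
  moreover have "norm (?x j - ?y j) \<le> ?bound" if "j \<le> T - 1" for j
    by (rule order_trans[OF _ slack])
      (rule persgd_seq_dist_le[OF X_convex \<open>closed X\<close> x0_in g_bound g_subgrad n_pos perm
          neighbors \<eta>_nonneg \<eta>_antimono that])
  moreover have "(k - 1) * n \<le> T - 1" if "k \<in> {1..K}" for k
    using epoch_start_add_le[OF that, of n] n_pos unfolding T_def by linarith
  ultimately show "norm (persgd X g \<eta> n K \<pi> x0 S - persgd X g \<eta> n K \<pi> x0 S') \<le> min (2 * R) ?bound"
    using n_pos K_pos eta_pos unfolding T_def by (auto intro!: persgd_dist_le)
qed

end
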